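(* Let $n\ge 2$ and let $F$ be an exponential functor with $\deg F(t)>0$. Consider $R_{F,\mathbb{Q}}$ with the $W=S_n$-action by signed permutations of variables, denoted $R_{F,\mathbb{Q}}^{\mathrm{sgn}}$, and the ideal $I_{F,\mathbb{Q}}=(F(t_2)-F(t_1),\dots,F(t_n)-F(t_{n-1}))$ with this action, denoted $I_{F,\mathbb{Q}}^{\mathrm{sgn}}$. Then the $R_{F,\mathbb{Q}}^W$-submodule $(I_{F,\mathbb{Q}}^{\mathrm{sgn}})^W$ of $(R_{F,\mathbb{Q}}^{\mathrm{sgn}})^W$ is generated by the $n-1$ antisymmetric polynomials $q_0,\dots,q_{n-2}$, where \[ q_i(t_1,\dots,t_n)=\det\begin{pmatrix} F(t_1)t_1^i & \cdots & F(t_n)t_n^i\\ t_1^{n-2}&\cdots&t_n^{n-2}\\ \vdots&\ddots&\vdots\\ t_1&\cdots&t_n\\ 1&\cdots&1\end{pmatrix}. \]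
   Context: $F$ is an exponential functor: a continuous symmetric monoidal functor from finite-dimensional complex inner product spaces (unitaries, $\oplus$) to finite-dimensional complex inner product super-vector spaces (grading-preserving unitaries, graded $\otimes$), preserving duals, with $F(\mathbb{C})$ having only positive $S^1$-characters; $F(t)\in\mathbb{Z}[t]$ is its graded (even minus odd) character polynomial. $R_{F,\mathbb{Q}}=\big(\mathbb{Q}[t_1,\dots,t_n]/(t_1\cdots t_n-1)\big)[F(t_1)^{-1},\dots,F(t_n)^{-1}]$; $R_{F,\mathbb{Q}}^W$ denotes invariants for the ordinary permutation action. The signed action is $\sigma\cdot f=\mathrm{sign}(\sigma)\,(f\circ\sigma)$ (permuting variables); $(\cdot)^W$ denotes fixed points. *)

theory Defs
  imports "HOL-Computational_Algebra.Polynomial" "HOL-Library.FuncSet"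
          "HOL-Combinatorics.Permutations" "Jordan_Normal_Form.Determinant"
begin

text \<open>Concrete model of R_{F,Q}: its elements are realised as complex-valued functions on
the set of complex points t = (t_0,...,t_{n-1}) with t_0*...*t_{n-1} = 1 and F(t_i) nonzero
(coordinates i >= n are fixed to 0). Since the ring is a reduced, irreducible localisation,
this realisation is injective.\<close>

definition Fc :: "int poly \<Rightarrow> complex \<Rightarrow> complex" where
  "Fc F z = poly (map_poly of_int F) z"

definition pts :: "nat \<Rightarrow> int poly \<Rightarrow> (nat \<Rightarrow> complex) set" where
  "pts n F = {t. (\<forall>i\<ge>n. t i = 0) \<and> (\<Prod>i<n. t i) = 1 \<and> (\<forall>i<n. Fc F (t i) \<noteq> 0)}"

inductive_set qpoly :: "nat \<Rightarrow> ((nat \<Rightarrow> complex) \<Rightarrow> complex) set" for n :: nat where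
  qconst: "c \<in> \<rat> \<Longrightarrow> (\<lambda>t. c) \<in> qpoly n"
| qvar: "i < n \<Longrightarrow> (\<lambda>t. t i) \<in> qpoly n"
| qadd: "p \<in> qpoly n \<Longrightarrow> q \<in> qpoly n \<Longrightarrow> (\<lambda>t. p t + q t) \<in> qpoly n"
| qmult: "p \<in> qpoly n \<Longrightarrow> q \<in> qpoly n \<Longrightarrow> (\<lambda>t. p t * q t) \<in> qpoly n"

text \<open>R_{F,Q} = (Q[t]/(t_1...t_n - 1))[F(t_1)^{-1},...,F(t_n)^{-1}].\<close>
definition RF :: "nat \<Rightarrow> int poly \<Rightarrow> ((nat \<Rightarrow> complex) \<Rightarrow> complex) set" where
  "RF n F = {restrict (\<lambda>t. p t / (\<Prod>i<n. Fc F (t i)) ^ k) (pts n F) | p k. p \<in> qpoly n}"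

definition perm_var :: "(nat \<Rightarrow> nat) \<Rightarrow> ((nat \<Rightarrow> complex) \<Rightarrow> complex) \<Rightarrow> ((nat \<Rightarrow> complex) \<Rightarrow> complex)" where
  "perm_var \<sigma> f = (\<lambda>t. f (t \<circ> \<sigma>))"

definition RF_W :: "nat \<Rightarrow> int poly \<Rightarrow> ((nat \<Rightarrow> complex) \<Rightarrow> complex) set" where
  "RF_W n F = {f \<in> RF n F. \<forall>\<sigma>. \<sigma> permutes {..<n} \<longrightarrow>
                 (\<forall>t\<in>pts n F. perm_var \<sigma> f t = f t)}"

definition sgn_fixed :: "nat \<Rightarrow> int poly \<Rightarrow> ((nat \<Rightarrow> complex) \<Rightarrow> complex) set
                          \<Rightarrow> ((nat \<Rightarrow> complex) \<Rightarrow> complex) set" where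
  "sgn_fixed n F S = {f \<in> S. \<forall>\<sigma>. \<sigma> permutes {..<n} \<longrightarrow>
                 (\<forall>t\<in>pts n F. of_int (sign \<sigma>) * perm_var \<sigma> f t = f t)}"

definition IF :: "nat \<Rightarrow> int poly \<Rightarrow> ((nat \<Rightarrow> complex) \<Rightarrow> complex) set" where
  "IF n F = {restrict (\<lambda>t. \<Sum>i<n-1. a i t * (Fc F (t (Suc i)) - Fc F (t i))) (pts n F) | a.
              \<forall>i<n-1. a i \<in> RF n F}"

definition qmat :: "nat \<Rightarrow> int poly \<Rightarrow> nat \<Rightarrow> (nat \<Rightarrow> complex) \<Rightarrow> complex mat" where
  "qmat n F i t = mat n n (\<lambda>(r, j). if r = 0 then Fc F (t j) * t j ^ i else t j ^ (n - 1 - r))"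

definition qgen :: "nat \<Rightarrow> int poly \<Rightarrow> nat \<Rightarrow> ((nat \<Rightarrow> complex) \<Rightarrow> complex)" where
  "qgen n F i = restrict (\<lambda>t. det (qmat n F i t)) (pts n F)"

definition q_span :: "nat \<Rightarrow> int poly \<Rightarrow> ((nat \<Rightarrow> complex) \<Rightarrow> complex) set" where
  "q_span n F = {restrict (\<lambda>t. \<Sum>i<n-1. s i t * qgen n F i t) (pts n F) | s.
              \<forall>i<n-1. s i \<in> RF_W n F}"

end

theory Submission
  imports Defs
begin

text \<open>Write \<open>d i = F(t (i+1)) - F(t i)\<close> and \<open>q a\<close> for the determinant with top row \<open>F(t j) t j ^ a\<close>.
  Every element of \<open>R_{F,Q}\<close> is a rational polynomial over a power of the symmetric
  denominator \<open>\<Prod>j F(t j)\<close>, so an antisymmetric element of the ideal is, up to \<open>1/n!\<close>, such a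
  denominator times the alternation of a polynomial combination \<open>\<Sum>i p i d i\<close>. Expanding \<open>F\<close> in
  monomials reduces the alternation of \<open>p d i\<close> to the antisymmetric polynomials
  \<open>B k = Alt (p (t (i+1) ^ k - t i ^ k))\<close>. Let \<open>\<nu> m\<close> be the determinant with top row \<open>t j ^ m\<close>:
  it vanishes for \<open>m < n - 1\<close> and equals the Vandermonde product \<open>V\<close> for \<open>m = n - 1\<close>. All
  \<open>B k\<close> and \<open>\<nu> m\<close> are \<open>V\<close> times polynomials, so a unitriangular solve gives polynomials \<open>s a\<close>
  with \<open>B k = \<Sum>a<n-1. s a \<nu> (k + a)\<close> for \<open>k < n\<close>; as sequences in \<open>k\<close> both sides satisfy
  the linear recurrence with characteristic polynomial \<open>\<Prod>j (X - t j)\<close>, so this holds for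
  all \<open>k\<close>, and recombining with the coefficients of \<open>F\<close> gives \<open>Alt (p d i) = \<Sum>a s a q a\<close>.
  Symmetrising the coefficients then puts the element into the span of the \<open>q a\<close>.
  Conversely \<open>q a\<close> lies in the ideal: expand along the top row, subtract \<open>F(t 0) \<nu> a = 0\<close>
  and telescope \<open>F(t j) - F(t 0)\<close>.\<close>

section \<open>Rational polynomial functions\<close>

lemma qpoly_zero: "(\<lambda>t. 0) \<in> qpoly n"
  using qconst[of 0] by simp

lemma qpoly_one: "(\<lambda>t. 1) \<in> qpoly n"
  using qconst[of 1] by simp

lemma qpoly_scale: "c \<in> \<rat> \<Longrightarrow> p \<in> qpoly n \<Longrightarrow> (\<lambda>t. c * p t) \<in> qpoly n"
  using qmult[OF qconst[of c]] by simp

lemma qpoly_diff: "p \<in> qpoly n \<Longrightarrow> q \<in> qpoly n \<Longrightarrow> (\<lambda>t. p t - q t) \<in> qpoly n"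
  using qadd[OF _ qpoly_scale[of "-1" q]] by simp

lemma qpoly_sum:
  "finite A \<Longrightarrow> (\<And>x. x \<in> A \<Longrightarrow> f x \<in> qpoly n) \<Longrightarrow> (\<lambda>t. \<Sum>x\<in>A. f x t) \<in> qpoly n"
  by (induction A rule: finite_induct) (auto intro: qpoly_zero qadd)

lemma qpoly_prod:
  "finite A \<Longrightarrow> (\<And>x. x \<in> A \<Longrightarrow> f x \<in> qpoly n) \<Longrightarrow> (\<lambda>t. \<Prod>x\<in>A. f x t) \<in> qpoly n"
  by (induction A rule: finite_induct) (auto intro: qpoly_one qmult)

lemma qpoly_power: "p \<in> qpoly n \<Longrightarrow> (\<lambda>t. p t ^ k) \<in> qpoly n"
  using qpoly_prod[of "{..<k}" "\<lambda>_. p" n] by simp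

lemma qpoly_Fc: "i < n \<Longrightarrow> (\<lambda>t. Fc F (t i)) \<in> qpoly n"
  unfolding Fc_def poly_altdef
  by (intro qpoly_sum) (auto intro!: qpoly_scale qpoly_power qvar simp: coeff_map_poly)

lemma qpoly_compose:
  "p \<in> qpoly n \<Longrightarrow> (\<And>m. m < n \<Longrightarrow> (\<lambda>t. \<phi> t m) \<in> qpoly n) \<Longrightarrow> (\<lambda>t. p (\<phi> t)) \<in> qpoly n"
  by (induction rule: qpoly.induct) (auto intro: qpoly.intros)

lemma qpoly_permute_vars:
  assumes "p \<in> qpoly n" "\<sigma> permutes {..<n}"
  shows "(\<lambda>t. p (t \<circ> \<sigma>)) \<in> qpoly n"
  using qpoly_compose[OF assms(1), of "\<lambda>t. t \<circ> \<sigma>"] assms(2)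
  by (simp add: qvar permutes_in_image[of \<sigma> "{..<n}", simplified])

lemma qpoly_fun_upd:
  assumes "p \<in> qpoly n" "j < n"
  shows "(\<lambda>t. p (t(i := t j))) \<in> qpoly n"
proof -
  have "(\<lambda>t. (t(i := t j)) m) \<in> qpoly n" if "m < n" for m
    using assms(2) that by (cases "m = i") (simp_all add: qvar)
  then show ?thesis
    using qpoly_compose[OF assms(1), of "\<lambda>t. t(i := t j)"] by simp
qed

lemma qpoly_det:
  assumes "\<And>t. A t \<in> carrier_mat m m"
    and "\<And>r c. r < m \<Longrightarrow> c < m \<Longrightarrow> (\<lambda>t. A t $$ (r, c)) \<in> qpoly n"
  shows "(\<lambda>t. det (A t)) \<in> qpoly n"
proof -
  have "(\<lambda>t. \<Sum>p | p permutes {0..<m}. signof p * (\<Prod>i = 0..<m. A t $$ (i, p i))) \<in> qpoly n"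
    using assms(2) by (intro qpoly_sum qpoly_scale qpoly_prod)
      (auto simp: finite_permutations permutes_in_image)
  then show ?thesis
    using det_def'[OF assms(1)] by simp
qed

lemma qpoly_isCont_shift: "p \<in> qpoly n \<Longrightarrow> isCont (\<lambda>s. p (t(m := t m + s))) s0"
proof (induction rule: qpoly.induct)
  case (qconst c)
  then show ?case by simp
next
  case (qvar i)
  then show ?case by (cases "i = m") simp_all
next
  case (qadd p q)
  then show ?case using isCont_add[OF qadd.IH] by simp
next
  case (qmult p q)
  then show ?case using isCont_mult[OF qmult.IH] by simp
qed

section \<open>Divisibility by the Vandermonde product\<close>

lemma qpoly_diff_fun_upd_factor:
  assumes "p \<in> qpoly n" "j < n"
  shows "\<exists>q\<in>qpoly n. \<forall>t. p t - p (t(i := t j)) = (t i - t j) * q t"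
  using assms
proof (induction rule: qpoly.induct)
  case (qconst c)
  then show ?case
    using qpoly_zero by (intro bexI[of _ "\<lambda>t. 0"]) auto
next
  case (qvar k)
  show ?case
  proof (cases "k = i")
    case True
    then show ?thesis
      using qpoly_one by (intro bexI[of _ "\<lambda>t. 1"]) auto
  next
    case False
    then show ?thesis
      using qpoly_zero by (intro bexI[of _ "\<lambda>t. 0"]) auto
  qed
next
  case (qadd p q)
  then obtain a b where a: "a \<in> qpoly n" "\<And>t. p t - p (t(i := t j)) = (t i - t j) * a t"
    and b: "b \<in> qpoly n" "\<And>t. q t - q (t(i := t j)) = (t i - t j) * b t"
    by blast
  have "p t + q t - (p (t(i := t j)) + q (t(i := t j))) = (t i - t j) * (a t + b t)" for t
    unfolding distrib_left a(2)[symmetric] b(2)[symmetric] by simp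
  then show ?case
    using qpoly.qadd[OF a(1) b(1)] by (intro bexI[of _ "\<lambda>t. a t + b t"]) (simp_all add: fun_upd_def)
next
  case (qmult p q)
  then obtain a b where a: "a \<in> qpoly n" "\<And>t. p t - p (t(i := t j)) = (t i - t j) * a t"
    and b: "b \<in> qpoly n" "\<And>t. q t - q (t(i := t j)) = (t i - t j) * b t"
    by blast
  have eq: "p t * q t - p (t(i := t j)) * q (t(i := t j))
      = (t i - t j) * (a t * q t + p (t(i := t j)) * b t)" for t
  proof -
    have "p t * q t - p (t(i := t j)) * q (t(i := t j))
        = (p t - p (t(i := t j))) * q t + p (t(i := t j)) * (q t - q (t(i := t j)))"
      by (simp add: algebra_simps)
    then show ?thesis
      unfolding a(2) b(2) by (simp add: algebra_simps)
  qed
  have "(\<lambda>t. a t * q t + p (t(i := t j)) * b t) \<in> qpoly n"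
    using qpoly.qadd[OF qpoly.qmult[OF a(1) qmult.hyps(2)]
        qpoly.qmult[OF qpoly_fun_upd[OF qmult.hyps(1) qmult.prems] b(1)]] .
  with eq show ?case
    by (intro bexI[of _ "\<lambda>t. a t * q t + p (t(i := t j)) * b t"]) (simp_all add: fun_upd_def)
qed

lemma isCont_eq_0_if_eq_0_off:
  fixes \<phi> :: "'a::{perfect_space, t2_space} \<Rightarrow> 'b::{t2_space, zero}"
  assumes "isCont \<phi> a" "\<And>x. x \<noteq> a \<Longrightarrow> \<phi> x = 0"
  shows "\<phi> a = 0"
proof -
  have "(\<phi> \<longlongrightarrow> 0) (at a)"
    by (rule tendsto_eventually) (auto simp: eventually_at_filter assms(2))
  then show ?thesis
    using assms(1) tendsto_unique[OF at_neq_bot] unfolding isCont_def by blast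
qed

text \<open>Perturbing a coordinate \<open>m \<in> {i, j} - {k, l}\<close> moves a point of the diagonal
  \<open>t k = t l\<close> off the hyperplane \<open>t i = t j\<close>; conclude by continuity.\<close>

lemma qpoly_cancel_diff_on_diagonal:
  assumes q: "q \<in> qpoly n" and ij: "i < j" and kl: "k < l" "(k, l) \<noteq> (i, j)"
    and vanish: "\<And>t. t k = t l \<Longrightarrow> (t i - t j) * q t = 0"
    and t: "t k = t l"
  shows "q t = 0"
proof -
  define m where "m = (if i \<in> {k, l} then j else i)"
  define m' where "m' = (if i \<in> {k, l} then i else j)"
  have m: "m \<notin> {k, l}" "m \<noteq> m'"
    using ij kl unfolding m_def m'_def by auto
  have off: "q t' = 0" if "t' k = t' l" "t' m \<noteq> t' m'" for t'
    using vanish[OF that(1)] that(2) unfolding m_def m'_def by (auto split: if_splits)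
  show ?thesis
  proof (cases "t m = t m'")
    case True
    have shift: "q (t(m := t m + s)) = 0" if "s \<noteq> 0" for s
    proof (rule off)
      show "(t(m := t m + s)) k = (t(m := t m + s)) l"
        using m t by simp
      show "(t(m := t m + s)) m \<noteq> (t(m := t m + s)) m'"
        using m True that by simp
    qed
    have "(\<lambda>s. q (t(m := t m + s))) 0 = 0"
      by (rule isCont_eq_0_if_eq_0_off[OF qpoly_isCont_shift[OF q]]) (simp add: shift)
    then show ?thesis
      by simp
  next
    case False
    then show ?thesis
      using off t by blast
  qed
qed

definition vandermonde :: "nat \<Rightarrow> (nat \<Rightarrow> complex) \<Rightarrow> complex" where
  "vandermonde n t = (\<Prod>(a, b) \<in> {(a, b). a < b \<and> b < n}. t a - t b)"

lemma qpoly_factor_prod_diffs: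
  assumes "finite S" "S \<subseteq> {(a, b). a < b \<and> b < n}" "p \<in> qpoly n"
    and "\<And>t a b. (a, b) \<in> S \<Longrightarrow> t a = t b \<Longrightarrow> p t = 0"
  shows "\<exists>q\<in>qpoly n. \<forall>t. p t = (\<Prod>(a, b)\<in>S. t a - t b) * q t"
  using assms
proof (induction S arbitrary: p rule: finite_induct)
  case empty
  then show ?case by auto
next
  case (insert x S)
  obtain i j where x: "x = (i, j)" by force
  with insert.prems have ij: "i < j" "j < n" by auto
  obtain q where q: "q \<in> qpoly n" "\<And>t. p t - p (t(i := t j)) = (t i - t j) * q t"
    using qpoly_diff_fun_upd_factor[OF insert.prems(2) ij(2)] by blast
  have p_eq: "p t = (t i - t j) * q t" for t
    using q(2)[of t] insert.prems(3)[of i j "t(i := t j)"] x ij by simp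
  have q_vanish: "q t = 0" if kl: "(k, l) \<in> S" and t: "t k = t l" for t k l
  proof (rule qpoly_cancel_diff_on_diagonal[OF q(1) ij(1) _ _ _ t])
    show "k < l" "(k, l) \<noteq> (i, j)"
      using kl insert.hyps(2) insert.prems(1) x by auto
    show "(t' i - t' j) * q t' = 0" if "t' k = t' l" for t'
      using insert.prems(3)[of k l t'] kl that p_eq[of t'] by simp
  qed
  have "S \<subseteq> {(a, b). a < b \<and> b < n}"
    using insert.prems(1) by blast
  then have "\<exists>r\<in>qpoly n. \<forall>t. q t = (\<Prod>(a, b)\<in>S. t a - t b) * r t"
    using q(1) q_vanish by (rule insert.IH)
  then obtain r where r: "r \<in> qpoly n" "\<And>t. q t = (\<Prod>(a, b)\<in>S. t a - t b) * r t"
    by blast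
  show ?case
  proof (intro bexI[OF _ r(1)] allI)
    fix t
    have "p t = (t i - t j) * ((\<Prod>(a, b)\<in>S. t a - t b) * r t)"
      by (simp add: p_eq r(2))
    also have "\<dots> = (\<Prod>(a, b)\<in>insert x S. t a - t b) * r t"
      using insert.hyps x by (simp add: mult.assoc)
    finally show "p t = (\<Prod>(a, b)\<in>insert x S. t a - t b) * r t" .
  qed
qed

lemma qpoly_vandermonde_factor:
  assumes "p \<in> qpoly n" "\<And>t a b. a < b \<Longrightarrow> b < n \<Longrightarrow> t a = t b \<Longrightarrow> p t = 0"
  shows "\<exists>q\<in>qpoly n. \<forall>t. p t = vandermonde n t * q t"
proof -
  have "finite {(a, b). a < b \<and> b < n}"
    by (rule finite_subset[of _ "{..<n} \<times> {..<n}"]) auto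
  from qpoly_factor_prod_diffs[OF this order.refl assms(1)] assms(2) show ?thesis
    unfolding vandermonde_def by blast
qed

definition vandermonde_mat :: "nat \<Rightarrow> (nat \<Rightarrow> complex) \<Rightarrow> complex mat" where
  "vandermonde_mat n t = mat n n (\<lambda>(r, c). t c ^ (n - 1 - r))"

lemma det_mat_scale_cols:
  "det (mat n n (\<lambda>(r, c). f r c * d c)) = (\<Prod>c<n. d c) * det (mat n n (\<lambda>(r, c). f r c))"
proof -
  have "det (mat n n (\<lambda>(r, c). f r c * d c))
      = (\<Sum>p | p permutes {0..<n}. signof p * (\<Prod>j<n. f (p j) j * d j))"
    by (subst det_col[of _ n]) (auto intro!: sum.cong prod.cong simp: permutes_in_image)
  also have "\<dots> = (\<Sum>p | p permutes {0..<n}. (\<Prod>c<n. d c) * (signof p * (\<Prod>j<n. f (p j) j)))"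
    by (auto intro!: sum.cong simp: prod.distrib)
  also have "\<dots> = (\<Prod>c<n. d c) * det (mat n n (\<lambda>(r, c). f r c))"
    by (subst det_col[of _ n]) (auto intro!: sum.cong prod.cong simp: permutes_in_image sum_distrib_left)
  finally show ?thesis .
qed

lemma vandermonde_Suc: "vandermonde (Suc n) t = vandermonde n t * (\<Prod>a<n. t a - t n)"
proof -
  have split: "{(a, b). a < b \<and> b < Suc n} = {(a, b). a < b \<and> b < n} \<union> (\<lambda>a. (a, n)) ` {..<n}"
    by auto
  have fin: "finite {(a, b). a < b \<and> b < n}"
    by (rule finite_subset[of _ "{..<n} \<times> {..<n}"]) auto
  have disj: "{(a, b). a < b \<and> b < n} \<inter> (\<lambda>a. (a, n)) ` {..<n} = {}"
    by auto
  show ?thesis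
    unfolding vandermonde_def split
    by (subst prod.union_disjoint[OF fin _ disj]) (auto simp: prod.reindex inj_on_def)
qed

lemma sum_bidiagonal_row:
  fixes g :: "nat \<Rightarrow> 'a::comm_ring_1"
  assumes "r < N"
  shows "(\<Sum>k = 0..<N. (if r = k then 1 else if k = Suc r then a else 0) * g k)
    = g r + (if Suc r < N then a * g (Suc r) else 0)"
proof -
  have "(\<Sum>k = 0..<N. (if r = k then 1 else if k = Suc r then a else 0) * g k)
      = (\<Sum>k = 0..<N. (if k = r then g k else 0) + (if k = Suc r then a * g k else 0))"
    by (rule sum.cong) auto
  also have "\<dots> = g r + (if Suc r < N then a * g (Suc r) else 0)"
    using assms by (simp add: sum.distrib sum.delta)
  finally show ?thesis .
qed

text \<open>Subtracting \<open>t n\<close> times row \<open>r + 1\<close> from every row \<open>r\<close> at once, that is, multiplying by a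
  unitriangular matrix, clears the last column except for its bottom entry.\<close>

lemma vandermonde_mat_Suc_row_reduction:
  "\<exists>L\<in>carrier_mat (Suc n) (Suc n). det L = 1 \<and> L * vandermonde_mat (Suc n) t
    = mat (Suc n) (Suc n) (\<lambda>(r, c). if r < n then t c ^ (n - 1 - r) * (t c - t n) else 1)"
    (is "\<exists>L\<in>_. _ \<and> L * ?V = ?B")
proof -
  define L :: "complex mat"
    where "L = mat (Suc n) (Suc n) (\<lambda>(r, c). if r = c then 1 else if c = Suc r then - t n else 0)"
  have L: "L \<in> carrier_mat (Suc n) (Suc n)"
    unfolding L_def by simp
  have "upper_triangular L"
    unfolding L_def upper_triangular_def by auto
  then have "det L = 1"
    using det_upper_triangular[OF _ L] unfolding prod_list_diag_prod L_def by simp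
  moreover have "L * ?V = ?B"
  proof (rule eq_matI)
    fix r c
    assume "r < dim_row ?B" "c < dim_col ?B"
    then have r: "r < Suc n" and c: "c < Suc n"
      by auto
    have "(L * ?V) $$ (r, c) = (\<Sum>k = 0..<Suc n. L $$ (r, k) * ?V $$ (k, c))"
      using r c L by (auto simp: index_mult_mat scalar_prod_def vandermonde_mat_def intro!: sum.cong)
    also have "\<dots> = (\<Sum>k = 0..<Suc n. (if r = k then 1 else if k = Suc r then - t n else 0) * ?V $$ (k, c))"
      using r by (intro sum.cong) (auto simp: L_def)
    also have "\<dots> = ?V $$ (r, c) + (if Suc r < Suc n then - t n * ?V $$ (Suc r, c) else 0)"
      by (rule sum_bidiagonal_row[OF r])
    also have "\<dots> = ?B $$ (r, c)"
    proof (cases "r < n")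
      case True
      then have "n - r = Suc (n - 1 - r)"
        by simp
      then show ?thesis
        using True r c by (simp add: vandermonde_mat_def algebra_simps)
    qed (use r c in \<open>simp add: vandermonde_mat_def\<close>)
    finally show "(L * ?V) $$ (r, c) = ?B $$ (r, c)" .
  qed (auto simp: L_def vandermonde_mat_def)
  ultimately show ?thesis
    using L by blast
qed

lemma det_vandermonde_mat: "det (vandermonde_mat n t) = vandermonde n t"
proof (induction n)
  case 0
  show ?case
    unfolding vandermonde_mat_def vandermonde_def by (simp add: det_dim_zero)
next
  case (Suc n)
  define B where "B = mat (Suc n) (Suc n) (\<lambda>(r, c). if r < n then t c ^ (n - 1 - r) * (t c - t n) else 1)"
  have B: "B \<in> carrier_mat (Suc n) (Suc n)"
    unfolding B_def by simp
  obtain L where L: "L \<in> carrier_mat (Suc n) (Suc n)" "det L = 1"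
    "L * vandermonde_mat (Suc n) t = B"
    using vandermonde_mat_Suc_row_reduction unfolding B_def by blast
  have "vandermonde_mat (Suc n) t \<in> carrier_mat (Suc n) (Suc n)"
    unfolding vandermonde_mat_def by simp
  from det_mult[OF L(1) this] L(2,3) have "det (vandermonde_mat (Suc n) t) = det B"
    by simp
  also have "\<dots> = (\<Sum>i<Suc n. B $$ (i, n) * cofactor B i n)"
    by (rule laplace_expansion_column[OF B]) simp
  also have "\<dots> = cofactor B n n"
    by (subst sum.remove[of _ n]) (auto simp: B_def intro!: sum.neutral)
  also have "mat_delete B n n = mat n n (\<lambda>(r, c). t c ^ (n - 1 - r) * (t c - t n))"
    unfolding mat_delete_def B_def by (rule eq_matI) auto
  then have "cofactor B n n = (\<Prod>c<n. t c - t n) * det (vandermonde_mat n t)"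
    unfolding cofactor_def vandermonde_mat_def by (simp add: det_mat_scale_cols)
  finally show ?case
    using Suc.IH vandermonde_Suc by simp
qed

section \<open>Determinants with a prescribed top row\<close>

definition qmat_top :: "nat \<Rightarrow> (complex \<Rightarrow> complex) \<Rightarrow> (nat \<Rightarrow> complex) \<Rightarrow> complex mat" where
  "qmat_top n G t = mat n n (\<lambda>(r, c). if r = 0 then G (t c) else t c ^ (n - 1 - r))"

definition top_cofactor :: "nat \<Rightarrow> nat \<Rightarrow> (nat \<Rightarrow> complex) \<Rightarrow> complex" where
  "top_cofactor n c t = cofactor (qmat_top n (\<lambda>_. 0) t) 0 c"

definition power_det :: "nat \<Rightarrow> nat \<Rightarrow> (nat \<Rightarrow> complex) \<Rightarrow> complex" where
  "power_det n m t = det (qmat_top n (\<lambda>z. z ^ m) t)"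

lemma qmat_top_carrier [simp]: "qmat_top n G t \<in> carrier_mat n n"
  unfolding qmat_top_def by simp

lemma qmat_eq_qmat_top: "qmat n F i t = qmat_top n (\<lambda>z. Fc F z * z ^ i) t"
  unfolding qmat_def qmat_top_def by simp

lemma cofactor_qmat_top: "cofactor (qmat_top n G t) 0 c = top_cofactor n c t"
proof -
  have "mat_delete (qmat_top n G t) 0 c = mat_delete (qmat_top n (\<lambda>_. 0) t) 0 c"
    by (rule eq_matI) (auto simp: mat_delete_def qmat_top_def)
  then show ?thesis
    unfolding top_cofactor_def cofactor_def by simp
qed

lemma det_qmat_top_expand:
  assumes "0 < n"
  shows "det (qmat_top n G t) = (\<Sum>c<n. G (t c) * top_cofactor n c t)"
proof -
  have "det (qmat_top n G t) = (\<Sum>c<n. qmat_top n G t $$ (0, c) * cofactor (qmat_top n G t) 0 c)"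
    by (rule laplace_expansion_row[OF qmat_top_carrier assms])
  also have "\<dots> = (\<Sum>c<n. G (t c) * top_cofactor n c t)"
    unfolding cofactor_qmat_top using assms by (intro sum.cong) (auto simp: qmat_top_def)
  finally show ?thesis .
qed

lemma power_det_expand:
  "0 < n \<Longrightarrow> power_det n m t = (\<Sum>c<n. t c ^ m * top_cofactor n c t)"
  unfolding power_det_def by (rule det_qmat_top_expand)

lemma power_det_eq_vandermonde: "power_det n (n - 1) t = vandermonde n t"
proof -
  have "qmat_top n (\<lambda>z. z ^ (n - 1)) t = vandermonde_mat n t"
    by (rule eq_matI) (auto simp: qmat_top_def vandermonde_mat_def)
  then show ?thesis
    unfolding power_det_def by (simp add: det_vandermonde_mat)
qed

lemma power_det_eq_0:
  assumes "m < n - 1"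
  shows "power_det n m t = 0"
proof -
  have "row (qmat_top n (\<lambda>z. z ^ m) t) 0 = row (qmat_top n (\<lambda>z. z ^ m) t) (n - 1 - m)"
    using assms by (intro eq_vecI) (auto simp: qmat_top_def)
  then show ?thesis
    unfolding power_det_def
    by (rule det_identical_rows[OF qmat_top_carrier, rotated 3]) (use assms in auto)
qed

lemma det_qmat_top_eq_0:
  assumes "a < b" "b < n" "t a = t b"
  shows "det (qmat_top n G t) = 0"
proof -
  have "col (qmat_top n G t) a = col (qmat_top n G t) b"
    using assms by (intro eq_vecI) (auto simp: qmat_top_def)
  then show ?thesis
    by (rule det_identical_columns[OF qmat_top_carrier, rotated 3]) (use assms in auto)
qed

lemma det_qmat_top_permute:
  assumes "\<sigma> permutes {..<n}"
  shows "det (qmat_top n G (t \<circ> \<sigma>)) = of_int (sign \<sigma>) * det (qmat_top n G t)"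
proof -
  let ?A = "transpose_mat (qmat_top n G t)"
  have \<sigma>: "\<sigma> permutes {0..<n}"
    using assms by (simp add: atLeast0LessThan)
  have "mat n n (\<lambda>(i, j). ?A $$ (\<sigma> i, j)) = transpose_mat (qmat_top n G (t \<circ> \<sigma>))"
    using \<sigma> by (intro eq_matI) (auto simp: qmat_top_def permutes_in_image)
  then have "det (transpose_mat (qmat_top n G (t \<circ> \<sigma>))) = of_int (sign \<sigma>) * det ?A"
    using det_permute_rows[of ?A n \<sigma>] \<sigma> by simp
  then show ?thesis
    by (simp add: det_transpose[OF qmat_top_carrier])
qed

lemma qpoly_det_qmat_top:
  assumes "\<And>c. c < n \<Longrightarrow> (\<lambda>t. G (t c)) \<in> qpoly n"
  shows "(\<lambda>t. det (qmat_top n G t)) \<in> qpoly n"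
proof (rule qpoly_det[OF qmat_top_carrier])
  fix r c
  assume "r < n" "c < n"
  then show "(\<lambda>t. qmat_top n G t $$ (r, c)) \<in> qpoly n"
    using assms by (cases "r = 0") (simp_all add: qmat_top_def qpoly_power qvar)
qed

lemma qpoly_power_det: "power_det n m \<in> qpoly n"
  unfolding power_det_def[abs_def] by (rule qpoly_det_qmat_top) (simp add: qpoly_power qvar)

lemma qpoly_top_cofactor: "top_cofactor n c \<in> qpoly n"
proof -
  have "(\<lambda>t. det (mat_delete (qmat_top n (\<lambda>_. 0) t) 0 c)) \<in> qpoly n"
  proof (rule qpoly_det)
    show "mat_delete (qmat_top n (\<lambda>_. 0) t) 0 c \<in> carrier_mat (n - 1) (n - 1)" for t
      by (rule mat_delete_carrier[OF qmat_top_carrier])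
    fix r c'
    assume rc: "r < n - 1" "c' < n - 1"
    define j where "j = (if c' < c then c' else Suc c')"
    have "mat_delete (qmat_top n (\<lambda>_. 0) t) 0 c $$ (r, c') = t j ^ (n - 1 - Suc r)" for t
      using rc unfolding mat_delete_def qmat_top_def j_def by simp
    moreover have "j < n"
      using rc unfolding j_def by auto
    ultimately show "(\<lambda>t. mat_delete (qmat_top n (\<lambda>_. 0) t) 0 c $$ (r, c')) \<in> qpoly n"
      by (simp add: qpoly_power qvar)
  qed
  then show ?thesis
    unfolding top_cofactor_def[abs_def] cofactor_def
    by (intro qpoly_scale) (simp_all add: Rats_minus_iff)
qed

lemma det_qmat_top_poly:
  assumes "0 < n"
  shows "det (qmat_top n (\<lambda>z. poly G z * z ^ a) t)
    = (\<Sum>d\<le>degree G. coeff G d * power_det n (d + a) t)"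
proof -
  have "det (qmat_top n (\<lambda>z. poly G z * z ^ a) t)
      = (\<Sum>c<n. \<Sum>d\<le>degree G. coeff G d * (t c ^ (d + a) * top_cofactor n c t))"
    unfolding det_qmat_top_expand[OF assms] poly_altdef
    by (simp add: sum_distrib_left sum_distrib_right power_add algebra_simps)
  also have "\<dots> = (\<Sum>d\<le>degree G. coeff G d * power_det n (d + a) t)"
    by (subst sum.swap) (simp add: power_det_expand[OF assms] sum_distrib_left)
  finally show ?thesis .
qed

section \<open>Alternation and symmetrisation\<close>

definition alternation :: "nat \<Rightarrow> ((nat \<Rightarrow> complex) \<Rightarrow> complex) \<Rightarrow> (nat \<Rightarrow> complex) \<Rightarrow> complex" where
  "alternation n h t = (\<Sum>\<sigma> | \<sigma> permutes {..<n}. of_int (sign \<sigma>) * h (t \<circ> \<sigma>))"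

definition symmetrization :: "nat \<Rightarrow> ((nat \<Rightarrow> complex) \<Rightarrow> complex) \<Rightarrow> (nat \<Rightarrow> complex) \<Rightarrow> complex" where
  "symmetrization n h t = (\<Sum>\<sigma> | \<sigma> permutes {..<n}. h (t \<circ> \<sigma>)) / fact n"

lemma inverse_fact_in_Rats: "1 / fact n \<in> \<rat>"
  by (metis Rats_1 Rats_divide Rats_of_nat of_nat_fact)

lemma of_int_sign_mult_self: "of_int (sign p) * (of_int (sign p) * x) = (x :: 'a::ring_1)"
  by (simp add: mult.assoc[symmetric] flip: of_int_mult)

lemma qpoly_alternation: "h \<in> qpoly n \<Longrightarrow> alternation n h \<in> qpoly n"
  unfolding alternation_def[abs_def]
  by (rule qpoly_sum) (auto intro!: qpoly_scale qpoly_permute_vars finite_permutations)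

lemma qpoly_symmetrization: "h \<in> qpoly n \<Longrightarrow> symmetrization n h \<in> qpoly n"
proof -
  assume h: "h \<in> qpoly n"
  have "(\<lambda>t. \<Sum>\<sigma> | \<sigma> permutes {..<n}. h (t \<circ> \<sigma>)) \<in> qpoly n"
    by (rule qpoly_sum) (auto intro: qpoly_permute_vars[OF h] finite_permutations)
  then have "(\<lambda>t. 1 / fact n * (\<Sum>\<sigma> | \<sigma> permutes {..<n}. h (t \<circ> \<sigma>))) \<in> qpoly n"
    by (rule qpoly_scale[OF inverse_fact_in_Rats])
  then show ?thesis
    unfolding symmetrization_def[abs_def] by simp
qed

lemma alternation_permute:
  assumes \<rho>: "\<rho> permutes {..<n}"
  shows "alternation n h (t \<circ> \<rho>) = of_int (sign \<rho>) * alternation n h t"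
proof -
  have inv\<rho>: "Hilbert_Choice.inv \<rho> permutes {..<n}"
    by (rule permutes_inv[OF \<rho>])
  have "alternation n h (t \<circ> \<rho>)
      = (\<Sum>\<sigma> | \<sigma> permutes {..<n}. of_int (sign (Hilbert_Choice.inv \<rho> \<circ> \<sigma>)) * h (t \<circ> \<rho> \<circ> (Hilbert_Choice.inv \<rho> \<circ> \<sigma>)))"
    unfolding alternation_def by (rule setum_permutations_compose_left[OF inv\<rho>])
  also have "\<dots> = (\<Sum>\<sigma> | \<sigma> permutes {..<n}. of_int (sign \<rho>) * (of_int (sign \<sigma>) * h (t \<circ> \<sigma>)))"
  proof (rule sum.cong[OF refl])
    fix \<sigma>
    assume "\<sigma> \<in> {\<sigma>. \<sigma> permutes {..<n}}"
    then have "sign (Hilbert_Choice.inv \<rho> \<circ> \<sigma>) = sign \<rho> * sign \<sigma>"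
      using sign_compose[OF permutes_imp_permutation[OF _ inv\<rho>], of \<sigma>]
        sign_inverse[OF permutes_imp_permutation[OF _ \<rho>]] permutes_imp_permutation[of "{..<n}" \<sigma>]
      by simp
    moreover have "t \<circ> \<rho> \<circ> (Hilbert_Choice.inv \<rho> \<circ> \<sigma>) = t \<circ> \<sigma>"
      using permutes_inv_o(1)[OF \<rho>] by (metis comp_assoc id_comp)
    ultimately show "of_int (sign (Hilbert_Choice.inv \<rho> \<circ> \<sigma>)) * h (t \<circ> \<rho> \<circ> (Hilbert_Choice.inv \<rho> \<circ> \<sigma>))
        = of_int (sign \<rho>) * (of_int (sign \<sigma>) * h (t \<circ> \<sigma>))"
      by simp
  qed
  also have "\<dots> = of_int (sign \<rho>) * alternation n h t"
    unfolding alternation_def by (simp add: sum_distrib_left)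
  finally show ?thesis .
qed

lemma alternation_eq_0:
  assumes "a < b" "b < n" "t a = t b"
  shows "alternation n h t = 0"
proof -
  have \<rho>: "transpose a b permutes {..<n}"
    using assms by (intro permutes_swap_id) auto
  have "t \<circ> transpose a b = t"
    using assms by (auto simp: transpose_def)
  then have "alternation n h t = - alternation n h t"
    using alternation_permute[OF \<rho>, of h t] assms sign_swap_id[of a b] by simp
  then show ?thesis
    by simp
qed

lemma alternation_sum:
  "alternation n (\<lambda>t. \<Sum>x\<in>A. h x t) t = (\<Sum>x\<in>A. alternation n (h x) t)"
  unfolding alternation_def by (simp add: sum_distrib_left sum.swap[of _ A])

lemma alternation_sum_scale:
  "alternation n (\<lambda>t. \<Sum>x\<in>A. c x * h x t) t = (\<Sum>x\<in>A. c x * alternation n (h x) t)"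
  unfolding alternation_def by (simp add: sum_distrib_left sum.swap[of _ A] mult.left_commute)

lemma symmetrization_permute:
  assumes "\<rho> permutes {..<n}"
  shows "symmetrization n h (t \<circ> \<rho>) = symmetrization n h t"
  unfolding symmetrization_def
  using setum_permutations_compose_left[OF assms, of "\<lambda>\<sigma>. h (t \<circ> \<sigma>)"] by (simp add: comp_assoc)

lemma symmetrization_divide:
  assumes "\<And>\<sigma>. \<sigma> permutes {..<n} \<Longrightarrow> g (t \<circ> \<sigma>) = g t"
  shows "symmetrization n (\<lambda>t. h t / g t) t = symmetrization n h t / g t"
  unfolding symmetrization_def using assms by (simp add: sum_divide_distrib mult.commute)

lemma antisymmetric_eq_alternation:
  assumes f: "\<And>\<sigma> t. \<sigma> permutes {..<n} \<Longrightarrow> t \<in> S \<Longrightarrow> of_int (sign \<sigma>) * f (t \<circ> \<sigma>) = f t"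
    and t: "t \<in> S"
  shows "fact n * f t = alternation n f t"
proof -
  have "alternation n f t = (\<Sum>\<sigma> | \<sigma> permutes {..<n}. f t)"
    unfolding alternation_def using f t by (intro sum.cong) auto
  then show ?thesis
    using card_permutations[of "{..<n}" n] by simp
qed

lemma antisymmetric_sum_symmetrization:
  assumes S: "\<And>\<sigma> t. \<sigma> permutes {..<n} \<Longrightarrow> t \<in> S \<Longrightarrow> t \<circ> \<sigma> \<in> S"
    and f: "\<And>\<sigma> t. \<sigma> permutes {..<n} \<Longrightarrow> t \<in> S \<Longrightarrow> of_int (sign \<sigma>) * f (t \<circ> \<sigma>) = f t"
    and Q: "\<And>a \<sigma> t. \<sigma> permutes {..<n} \<Longrightarrow> Q a (t \<circ> \<sigma>) = of_int (sign \<sigma>) * Q a t"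
    and f_eq: "\<And>t. t \<in> S \<Longrightarrow> f t = (\<Sum>a\<in>A. c a t * Q a t)"
    and t: "t \<in> S"
  shows "f t = (\<Sum>a\<in>A. symmetrization n (c a) t * Q a t)"
proof -
  have "fact n * f t = (\<Sum>\<sigma> | \<sigma> permutes {..<n}. of_int (sign \<sigma>) * f (t \<circ> \<sigma>))"
    using antisymmetric_eq_alternation[OF f t] unfolding alternation_def .
  also have "\<dots> = (\<Sum>\<sigma> | \<sigma> permutes {..<n}. \<Sum>a\<in>A. c a (t \<circ> \<sigma>) * Q a t)"
  proof (rule sum.cong[OF refl])
    fix \<sigma>
    assume "\<sigma> \<in> {\<sigma>. \<sigma> permutes {..<n}}"
    then have \<sigma>: "\<sigma> permutes {..<n}"
      by simp
    show "of_int (sign \<sigma>) * f (t \<circ> \<sigma>) = (\<Sum>a\<in>A. c a (t \<circ> \<sigma>) * Q a t)"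
      using f_eq[OF S[OF \<sigma> t]] Q[OF \<sigma>]
      by (simp add: sum_distrib_left mult.left_commute of_int_sign_mult_self)
  qed
  also have "\<dots> = (\<Sum>a\<in>A. (\<Sum>\<sigma> | \<sigma> permutes {..<n}. c a (t \<circ> \<sigma>)) * Q a t)"
    by (simp add: sum.swap[of _ A] sum_distrib_right)
  also have "\<dots> = fact n * (\<Sum>a\<in>A. symmetrization n (c a) t * Q a t)"
    unfolding symmetrization_def by (simp add: sum_distrib_left)
  finally show ?thesis
    by simp
qed

section \<open>Linear recurrences\<close>

definition lin_recurrent :: "'a::comm_ring_1 poly \<Rightarrow> (nat \<Rightarrow> 'a) \<Rightarrow> bool" where
  "lin_recurrent P u \<longleftrightarrow> (\<forall>k. (\<Sum>j\<le>degree P. coeff P j * u (k + j)) = 0)"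

lemma lin_recurrent_power:
  assumes "poly P z = 0"
  shows "lin_recurrent P (\<lambda>k. z ^ k)"
  unfolding lin_recurrent_def
proof
  fix k
  have "(\<Sum>j\<le>degree P. coeff P j * z ^ (k + j)) = z ^ k * poly P z"
    by (simp add: poly_altdef sum_distrib_left power_add algebra_simps)
  then show "(\<Sum>j\<le>degree P. coeff P j * z ^ (k + j)) = 0"
    using assms by simp
qed

lemma lin_recurrent_scale: "lin_recurrent P u \<Longrightarrow> lin_recurrent P (\<lambda>k. c * u k)"
  unfolding lin_recurrent_def by (simp add: sum_distrib_left[symmetric] mult.left_commute)

lemma lin_recurrent_diff:
  "lin_recurrent P u \<Longrightarrow> lin_recurrent P v \<Longrightarrow> lin_recurrent P (\<lambda>k. u k - v k)"
  unfolding lin_recurrent_def by (simp add: right_diff_distrib sum_subtractf)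

lemma lin_recurrent_sum:
  assumes "finite A" "\<And>x. x \<in> A \<Longrightarrow> lin_recurrent P (u x)"
  shows "lin_recurrent P (\<lambda>k. \<Sum>x\<in>A. u x k)"
  using assms unfolding lin_recurrent_def
  by (simp add: sum_distrib_left sum.swap[of _ A])

lemma lin_recurrent_eq_0:
  fixes P :: "'a::field poly"
  assumes u: "lin_recurrent P u" and P: "P \<noteq> 0" and init: "\<And>k. k < degree P \<Longrightarrow> u k = 0"
  shows "u k = 0"
proof (induction k rule: less_induct)
  case (less k)
  show ?case
  proof (cases "k < degree P")
    case False
    define m where "m = k - degree P"
    have "0 = (\<Sum>j\<le>degree P. coeff P j * u (m + j))"
      using u unfolding lin_recurrent_def by simp
    also have "\<dots> = lead_coeff P * u k + (\<Sum>j<degree P. coeff P j * u (m + j))"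
      using False unfolding m_def by (simp add: lessThan_Suc_atMost[symmetric])
    also have "(\<Sum>j<degree P. coeff P j * u (m + j)) = 0"
      using False less.IH unfolding m_def by (intro sum.neutral) auto
    finally show ?thesis
      using P by simp
  qed (rule init)
qed

section \<open>Alternations of the ideal generators\<close>

lemma power_det_vandermonde_factor:
  obtains \<eta> where "\<And>m. \<eta> m \<in> qpoly n" "\<And>t. \<eta> (n - 1) t = 1"
    "\<And>m t. m < n - 1 \<Longrightarrow> \<eta> m t = 0" "\<And>m t. power_det n m t = vandermonde n t * \<eta> m t"
proof -
  have "\<forall>m. \<exists>q\<in>qpoly n. \<forall>t. power_det n m t = vandermonde n t * q t"
    by (intro allI qpoly_vandermonde_factor[OF qpoly_power_det])
      (auto simp: power_det_def intro: det_qmat_top_eq_0)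
  then obtain \<eta>' where \<eta>': "\<And>m. \<eta>' m \<in> qpoly n"
    "\<And>m t. power_det n m t = vandermonde n t * \<eta>' m t"
    by metis
  define \<eta> where "\<eta> m = (if m = n - 1 then (\<lambda>t. 1) else if m < n - 1 then (\<lambda>t. 0) else \<eta>' m)" for m
  show thesis
  proof (rule that[of \<eta>])
    show "\<eta> m \<in> qpoly n" for m
      unfolding \<eta>_def using \<eta>'(1) qpoly_one qpoly_zero by auto
    show "power_det n m t = vandermonde n t * \<eta> m t" for m t
    proof (cases "m = n - 1")
      case True
      then show ?thesis
        using power_det_eq_vandermonde[of n t] unfolding \<eta>_def by simp
    next
      case False
      then show ?thesis
        using \<eta>'(2)[of m t] power_det_eq_0[of m n t] unfolding \<eta>_def by auto
    qed
  qed (simp_all add: \<eta>_def)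
qed

lemma qpoly_unitriangular_solve:
  fixes \<mu> :: "nat \<Rightarrow> (nat \<Rightarrow> complex) \<Rightarrow> complex" and m :: nat
  assumes "\<And>k. \<mu> k \<in> qpoly n" "\<And>k k'. c k k' \<in> qpoly n"
  shows "\<exists>\<sigma>. (\<forall>k. \<sigma> k \<in> qpoly n)
    \<and> (\<forall>k\<in>{1..m}. \<forall>t. \<mu> k t = \<sigma> k t + (\<Sum>k'\<in>{1..<k}. \<sigma> k' t * c k k' t))"
proof (induction m)
  case 0
  show ?case
    using qpoly_zero by (intro exI[of _ "\<lambda>_ _. 0"]) auto
next
  case (Suc m)
  then obtain \<sigma> where \<sigma>: "\<And>k. \<sigma> k \<in> qpoly n"
    "\<And>k t. k \<in> {1..m} \<Longrightarrow> \<mu> k t = \<sigma> k t + (\<Sum>k'\<in>{1..<k}. \<sigma> k' t * c k k' t)"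
    by blast
  define \<sigma>' where "\<sigma>' = \<sigma>(Suc m := (\<lambda>t. \<mu> (Suc m) t - (\<Sum>k'\<in>{1..<Suc m}. \<sigma> k' t * c (Suc m) k' t)))"
  have "\<sigma>' k \<in> qpoly n" for k
  proof (cases "k = Suc m")
    case True
    have "(\<lambda>t. \<Sum>k'\<in>{1..<Suc m}. \<sigma> k' t * c (Suc m) k' t) \<in> qpoly n"
      using \<sigma>(1) assms(2) by (intro qpoly_sum qmult) auto
    then show ?thesis
      using True assms(1) unfolding \<sigma>'_def by (simp add: qpoly_diff)
  qed (simp add: \<sigma>'_def \<sigma>(1))
  moreover have "\<mu> k t = \<sigma>' k t + (\<Sum>k'\<in>{1..<k}. \<sigma>' k' t * c k k' t)" if k: "k \<in> {1..Suc m}" for k t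
  proof -
    have "(\<Sum>k'\<in>{1..<k}. \<sigma>' k' t * c k k' t) = (\<Sum>k'\<in>{1..<k}. \<sigma> k' t * c k k' t)"
      using k unfolding \<sigma>'_def by (intro sum.cong) auto
    then show ?thesis
      using k \<sigma>(2)[of k t] unfolding \<sigma>'_def by (cases "k = Suc m") auto
  qed
  ultimately show ?case
    by blast
qed

text \<open>Since \<open>power_det n m = 0\<close> for \<open>m < n - 1\<close> and \<open>power_det n (n - 1)\<close> is the Vandermonde
  product, matching the first \<open>n\<close> terms of a sequence of Vandermonde multiples is a
  unitriangular system.\<close>

lemma vandermonde_multiples_initial_span:
  fixes B \<mu> :: "nat \<Rightarrow> (nat \<Rightarrow> complex) \<Rightarrow> complex"
  assumes \<mu>: "\<And>k. \<mu> k \<in> qpoly n" and B: "\<And>k t. B k t = vandermonde n t * \<mu> k t"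
    and B0: "\<And>t. B 0 t = 0"
  shows "\<exists>s. (\<forall>a. s a \<in> qpoly n)
    \<and> (\<forall>k<n. \<forall>t. B k t = (\<Sum>a<n - 1. s a t * power_det n (k + a) t))"
proof -
  obtain \<eta> where \<eta>: "\<And>m. \<eta> m \<in> qpoly n" "\<And>t. \<eta> (n - 1) t = 1"
    "\<And>m t. m < n - 1 \<Longrightarrow> \<eta> m t = 0" "\<And>m t. power_det n m t = vandermonde n t * \<eta> m t"
    by (rule power_det_vandermonde_factor[where n = n]) blast
  obtain \<sigma> where \<sigma>: "\<And>k. \<sigma> k \<in> qpoly n"
    "\<And>k t. k \<in> {1..n - 1} \<Longrightarrow> \<mu> k t = \<sigma> k t + (\<Sum>k'\<in>{1..<k}. \<sigma> k' t * \<eta> (k + (n - 1) - k') t)"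
    using qpoly_unitriangular_solve[of \<mu> n "\<lambda>k k'. \<eta> (k + (n - 1) - k')" "n - 1"] \<mu> \<eta>(1) by blast
  define s where "s a = \<sigma> (n - 1 - a)" for a
  have "B k t = (\<Sum>a<n - 1. s a t * power_det n (k + a) t)" if k: "k < n" for k t
  proof (cases "k = 0")
    case True
    then show ?thesis
      using B0 power_det_eq_0 by simp
  next
    case False
    have "(\<Sum>a<n - 1. s a t * power_det n (k + a) t)
        = (\<Sum>k'\<in>{1..n - 1}. \<sigma> k' t * power_det n (k + (n - 1) - k') t)"
      unfolding s_def by (rule sum.reindex_bij_witness[of _ "\<lambda>k'. n - 1 - k'" "\<lambda>a. n - 1 - a"]) auto
    also have "\<dots> = (\<Sum>k'\<in>{1..k}. \<sigma> k' t * power_det n (k + (n - 1) - k') t)"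
      using k by (intro sum.mono_neutral_right) (auto simp: power_det_eq_0)
    also have "\<dots> = \<sigma> k t * power_det n (n - 1) t
        + (\<Sum>k'\<in>{1..<k}. \<sigma> k' t * power_det n (k + (n - 1) - k') t)"
      using False by (subst atLeastLessThanSuc_atLeastAtMost[symmetric]) (simp add: add.commute)
    also have "\<dots> = vandermonde n t * (\<sigma> k t + (\<Sum>k'\<in>{1..<k}. \<sigma> k' t * \<eta> (k + (n - 1) - k') t))"
      using \<eta>(2)[of t] by (simp add: \<eta>(4) sum_distrib_left algebra_simps)
    also have "\<dots> = B k t"
      using \<sigma>(2)[of k t] False k B by simp
    finally show ?thesis
      by simp
  qed
  then show ?thesis
    using \<sigma>(1) unfolding s_def by (intro exI[of _ s]) (simp add: s_def)
qed

definition root_poly :: "nat \<Rightarrow> (nat \<Rightarrow> complex) \<Rightarrow> complex poly" where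
  "root_poly n t = (\<Prod>c<n. [:- t c, 1:])"

lemma root_poly_nonzero: "root_poly n t \<noteq> 0"
  unfolding root_poly_def by simp

lemma degree_root_poly: "degree (root_poly n t) = n"
  unfolding root_poly_def by (subst degree_prod_sum_eq) auto

lemma poly_root_poly: "c < n \<Longrightarrow> poly (root_poly n t) (t c) = 0"
  unfolding root_poly_def poly_prod by (auto intro!: prod_zero)

lemma lin_recurrent_power_det:
  assumes "0 < n"
  shows "lin_recurrent (root_poly n t) (\<lambda>k. power_det n (k + a) t)"
proof -
  have eq: "(\<lambda>k. power_det n (k + a) t) = (\<lambda>k. \<Sum>c<n. t c ^ a * top_cofactor n c t * t c ^ k)"
    using power_det_expand[OF assms] by (simp add: power_add algebra_simps)
  show ?thesis
    unfolding eq by (intro lin_recurrent_sum lin_recurrent_scale lin_recurrent_power poly_root_poly) auto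
qed

lemma lin_recurrent_alternation_power_diff:
  assumes "i < n" "j < n"
  shows "lin_recurrent (root_poly n t) (\<lambda>k. alternation n (\<lambda>t. p t * (t j ^ k - t i ^ k)) t)"
  unfolding alternation_def
proof (rule lin_recurrent_sum[OF finite_permutations[OF finite_lessThan]])
  fix \<sigma>
  assume "\<sigma> \<in> {\<sigma>. \<sigma> permutes {..<n}}"
  then have \<sigma>: "\<sigma> permutes {..<n}"
    by simp
  have "\<sigma> j < n" "\<sigma> i < n"
    using assms permutes_in_image[OF \<sigma>] by auto
  then have "lin_recurrent (root_poly n t) (\<lambda>k. t (\<sigma> j) ^ k - t (\<sigma> i) ^ k)"
    by (intro lin_recurrent_diff lin_recurrent_power poly_root_poly)
  then show "lin_recurrent (root_poly n t)
      (\<lambda>k. of_int (sign \<sigma>) * (p (t \<circ> \<sigma>) * ((t \<circ> \<sigma>) j ^ k - (t \<circ> \<sigma>) i ^ k)))"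
    using lin_recurrent_scale[of _ _ "of_int (sign \<sigma>) * p (t \<circ> \<sigma>)"] by (simp add: mult.assoc)
qed

text \<open>Both sides, as sequences in \<open>k\<close>, satisfy the linear recurrence with characteristic
  polynomial \<open>root_poly n t\<close>, and they agree for \<open>k < n\<close> by the unitriangular solve.\<close>

lemma alternation_power_diff_span:
  assumes p: "p \<in> qpoly n" and ij: "i < n" "j < n"
  shows "\<exists>s. (\<forall>a. s a \<in> qpoly n) \<and> (\<forall>k t. alternation n (\<lambda>t. p t * (t j ^ k - t i ^ k)) t
    = (\<Sum>a<n - 1. s a t * power_det n (k + a) t))"
proof -
  define B where "B k = alternation n (\<lambda>t. p t * (t j ^ k - t i ^ k))" for k
  have Bq: "B k \<in> qpoly n" for k
    unfolding B_def using ij by (intro qpoly_alternation qmult[OF p] qpoly_diff qpoly_power qvar)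
  have "\<forall>k. \<exists>q\<in>qpoly n. \<forall>t. B k t = vandermonde n t * q t"
  proof
    fix k
    show "\<exists>q\<in>qpoly n. \<forall>t. B k t = vandermonde n t * q t"
      by (rule qpoly_vandermonde_factor[OF Bq]) (auto simp: B_def intro: alternation_eq_0)
  qed
  then obtain \<mu> where \<mu>: "\<And>k. \<mu> k \<in> qpoly n" "\<And>k t. B k t = vandermonde n t * \<mu> k t"
    by metis
  have B0: "B 0 t = 0" for t
    unfolding B_def alternation_def by simp
  obtain s where s: "\<And>a. s a \<in> qpoly n"
    "\<And>k t. k < n \<Longrightarrow> B k t = (\<Sum>a<n - 1. s a t * power_det n (k + a) t)"
    using vandermonde_multiples_initial_span[where B = B and \<mu> = \<mu>, OF \<mu> B0] by blast
  have "B k t = (\<Sum>a<n - 1. s a t * power_det n (k + a) t)" for k t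
  proof -
    have "lin_recurrent (root_poly n t) (\<lambda>k. B k t - (\<Sum>a<n - 1. s a t * power_det n (k + a) t))"
      unfolding B_def using ij
      by (intro lin_recurrent_diff lin_recurrent_alternation_power_diff lin_recurrent_sum
          lin_recurrent_scale lin_recurrent_power_det) auto
    then have "B k t - (\<Sum>a<n - 1. s a t * power_det n (k + a) t) = 0"
      by (rule lin_recurrent_eq_0[OF _ root_poly_nonzero]) (simp add: degree_root_poly s(2))
    then show ?thesis
      by simp
  qed
  then show ?thesis
    using s(1) unfolding B_def by (intro exI[of _ s]) simp
qed

lemma alternation_poly_diff_span:
  assumes p: "p \<in> qpoly n" and ij: "i < n" "j < n"
  shows "\<exists>s. (\<forall>a. s a \<in> qpoly n) \<and> (\<forall>t. alternation n (\<lambda>t. p t * (poly G (t j) - poly G (t i))) t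
    = (\<Sum>a<n - 1. s a t * det (qmat_top n (\<lambda>z. poly G z * z ^ a) t)))"
proof -
  obtain s where s: "\<And>a. s a \<in> qpoly n"
    "\<And>k t. alternation n (\<lambda>t. p t * (t j ^ k - t i ^ k)) t = (\<Sum>a<n - 1. s a t * power_det n (k + a) t)"
    using alternation_power_diff_span[OF assms] by blast
  have n: "0 < n"
    using ij by simp
  have "alternation n (\<lambda>t. p t * (poly G (t j) - poly G (t i))) t
      = (\<Sum>a<n - 1. s a t * det (qmat_top n (\<lambda>z. poly G z * z ^ a) t))" for t
  proof -
    have "(\<lambda>t. p t * (poly G (t j) - poly G (t i)))
        = (\<lambda>t. \<Sum>d\<le>degree G. coeff G d * (p t * (t j ^ d - t i ^ d)))"
      by (simp add: poly_altdef sum_subtractf[symmetric] sum_distrib_left algebra_simps)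
    then have "alternation n (\<lambda>t. p t * (poly G (t j) - poly G (t i))) t
        = (\<Sum>d\<le>degree G. coeff G d * (\<Sum>a<n - 1. s a t * power_det n (d + a) t))"
      by (simp add: alternation_sum_scale s(2))
    also have "\<dots> = (\<Sum>a<n - 1. s a t * (\<Sum>d\<le>degree G. coeff G d * power_det n (d + a) t))"
      by (simp add: sum_distrib_left sum.swap[of _ "{..degree G}"] algebra_simps)
    finally show ?thesis
      by (simp add: det_qmat_top_poly[OF n])
  qed
  then show ?thesis
    using s(1) by (intro exI[of _ s]) simp
qed

section \<open>The ring \<open>R_{F,Q}\<close> and the ideal\<close>

definition rf_denom :: "nat \<Rightarrow> int poly \<Rightarrow> (nat \<Rightarrow> complex) \<Rightarrow> complex" where
  "rf_denom n F t = (\<Prod>i<n. Fc F (t i))"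

lemma qpoly_rf_denom: "rf_denom n F \<in> qpoly n"
  unfolding rf_denom_def[abs_def] by (rule qpoly_prod) (auto intro: qpoly_Fc)

lemma rf_denom_nonzero: "t \<in> pts n F \<Longrightarrow> rf_denom n F t \<noteq> 0"
  unfolding pts_def rf_denom_def by auto

lemma rf_denom_permute: "\<sigma> permutes {..<n} \<Longrightarrow> rf_denom n F (t \<circ> \<sigma>) = rf_denom n F t"
  unfolding rf_denom_def using prod.permute[of \<sigma> "{..<n}" "\<lambda>i. Fc F (t i)"] by (simp add: o_def)

lemma pts_permute:
  assumes \<sigma>: "\<sigma> permutes {..<n}" and t: "t \<in> pts n F"
  shows "t \<circ> \<sigma> \<in> pts n F"
proof -
  have "\<forall>i\<ge>n. (t \<circ> \<sigma>) i = 0"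
    using t permutes_not_in[OF \<sigma>] unfolding pts_def by auto
  moreover have "(\<Prod>i<n. (t \<circ> \<sigma>) i) = 1"
    using prod.permute[OF \<sigma>, of t] t unfolding pts_def by simp
  moreover have "\<forall>i<n. Fc F ((t \<circ> \<sigma>) i) \<noteq> 0"
    using t permutes_in_image[OF \<sigma>] unfolding pts_def by auto
  ultimately show ?thesis
    unfolding pts_def by simp
qed

lemma RF_intro:
  assumes "p \<in> qpoly n" "\<And>t. t \<in> pts n F \<Longrightarrow> g t = p t / rf_denom n F t ^ k"
  shows "restrict g (pts n F) \<in> RF n F"
proof -
  have "restrict g (pts n F) = restrict (\<lambda>t. p t / (\<Prod>i<n. Fc F (t i)) ^ k) (pts n F)"
    using assms(2) unfolding rf_denom_def by (intro restrict_ext) auto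
  then show ?thesis
    unfolding RF_def using assms(1) by blast
qed

lemma RF_common_denominator:
  assumes "finite A" "\<And>x. x \<in> A \<Longrightarrow> f x \<in> RF n F"
  obtains p K where "\<And>x. x \<in> A \<Longrightarrow> p x \<in> qpoly n"
    "\<And>x t. x \<in> A \<Longrightarrow> t \<in> pts n F \<Longrightarrow> f x t = p x t / rf_denom n F t ^ K"
proof -
  have "\<forall>x\<in>A. \<exists>p k. p \<in> qpoly n \<and> (\<forall>t\<in>pts n F. f x t = p t / rf_denom n F t ^ k)"
    using assms(2) unfolding RF_def rf_denom_def by fastforce
  then obtain p k where pk: "\<And>x. x \<in> A \<Longrightarrow> p x \<in> qpoly n"
    "\<And>x t. x \<in> A \<Longrightarrow> t \<in> pts n F \<Longrightarrow> f x t = p x t / rf_denom n F t ^ k x"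
    by metis
  define K where "K = (\<Sum>x\<in>A. k x)"
  show thesis
  proof (rule that[of "\<lambda>x t. p x t * rf_denom n F t ^ (K - k x)" K])
    show "(\<lambda>t. p x t * rf_denom n F t ^ (K - k x)) \<in> qpoly n" if "x \<in> A" for x
      using pk(1)[OF that] by (intro qmult qpoly_power qpoly_rf_denom)
    fix x t
    assume x: "x \<in> A" and t: "t \<in> pts n F"
    have "k x \<le> K"
      unfolding K_def using assms(1) x by (intro member_le_sum) auto
    then have "rf_denom n F t ^ K = rf_denom n F t ^ k x * rf_denom n F t ^ (K - k x)"
      by (simp flip: power_add)
    then show "f x t = p x t * rf_denom n F t ^ (K - k x) / rf_denom n F t ^ K"
      using pk(2)[OF x t] rf_denom_nonzero[OF t] by (simp add: field_simps)
  qed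
qed

lemma RF_lincomb:
  assumes "finite A" "\<And>x. x \<in> A \<Longrightarrow> f x \<in> RF n F" "\<And>x. x \<in> A \<Longrightarrow> q x \<in> qpoly n"
  shows "restrict (\<lambda>t. \<Sum>x\<in>A. f x t * q x t) (pts n F) \<in> RF n F"
proof -
  obtain p K where p: "\<And>x. x \<in> A \<Longrightarrow> p x \<in> qpoly n"
    "\<And>x t. x \<in> A \<Longrightarrow> t \<in> pts n F \<Longrightarrow> f x t = p x t / rf_denom n F t ^ K"
    using RF_common_denominator[of A f n F] assms(1,2) by metis
  show ?thesis
  proof (rule RF_intro)
    show "(\<lambda>t. \<Sum>x\<in>A. p x t * q x t) \<in> qpoly n"
      using p(1) assms(1,3) by (intro qpoly_sum qmult) auto
    show "(\<Sum>x\<in>A. f x t * q x t) = (\<Sum>x\<in>A. p x t * q x t) / rf_denom n F t ^ K"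
      if "t \<in> pts n F" for t
      using p(2) that by (simp add: sum_divide_distrib)
  qed
qed

lemma IF_common_denominator:
  assumes "f \<in> IF n F"
  obtains p K where "\<And>i. i < n - 1 \<Longrightarrow> p i \<in> qpoly n"
    "\<And>t. t \<in> pts n F \<Longrightarrow>
      f t = (\<Sum>i<n - 1. p i t * (Fc F (t (Suc i)) - Fc F (t i))) / rf_denom n F t ^ K"
proof -
  obtain a where f: "f = restrict (\<lambda>t. \<Sum>i<n - 1. a i t * (Fc F (t (Suc i)) - Fc F (t i))) (pts n F)"
    and a: "\<And>i. i < n - 1 \<Longrightarrow> a i \<in> RF n F"
    using assms unfolding IF_def by blast
  obtain p K where p: "\<And>i. i \<in> {..<n - 1} \<Longrightarrow> p i \<in> qpoly n"
    "\<And>i t. i \<in> {..<n - 1} \<Longrightarrow> t \<in> pts n F \<Longrightarrow> a i t = p i t / rf_denom n F t ^ K"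
    using RF_common_denominator[of "{..<n - 1}" a] a by (metis finite_lessThan lessThan_iff)
  show thesis
  proof (rule that[of p K])
    show "p i \<in> qpoly n" if "i < n - 1" for i
      using p(1) that by simp
    show "f t = (\<Sum>i<n - 1. p i t * (Fc F (t (Suc i)) - Fc F (t i))) / rf_denom n F t ^ K"
      if "t \<in> pts n F" for t
      using p(2) that unfolding f by (simp add: sum_divide_distrib)
  qed
qed

text \<open>Expand along the top row, subtract \<open>G (t 0) * power_det n a t = 0\<close> and telescope
  \<open>G (t j) - G (t 0)\<close>.\<close>

lemma det_qmat_top_in_ideal:
  assumes a: "a < n - 1"
  shows "\<exists>c. (\<forall>i. c i \<in> qpoly n) \<and> (\<forall>G t. det (qmat_top n (\<lambda>z. G z * z ^ a) t)
    = (\<Sum>i<n - 1. c i t * (G (t (Suc i)) - G (t i))))"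
proof -
  have n: "0 < n"
    using a by simp
  define c where "c i t = (\<Sum>j<n. if i < j then t j ^ a * top_cofactor n j t else 0)" for i t
  show ?thesis
  proof (intro exI[of _ c] conjI allI)
    show "c i \<in> qpoly n" for i
      unfolding c_def[abs_def]
    proof (rule qpoly_sum)
      fix j
      assume "j \<in> {..<n}"
      then show "(\<lambda>t. if i < j then t j ^ a * top_cofactor n j t else 0) \<in> qpoly n"
        by (cases "i < j") (auto intro!: qmult qpoly_power qvar qpoly_top_cofactor qpoly_zero)
    qed simp
    fix G :: "complex \<Rightarrow> complex" and t :: "nat \<Rightarrow> complex"
    let ?d = "\<lambda>i. G (t (Suc i)) - G (t i)"
    have "(\<Sum>j<n. t j ^ a * top_cofactor n j t) = 0"
      using power_det_expand[OF n, of a t] power_det_eq_0[OF a] by simp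
    then have "det (qmat_top n (\<lambda>z. G z * z ^ a) t)
        = (\<Sum>j<n. G (t j) * t j ^ a * top_cofactor n j t) - G (t 0) * (\<Sum>j<n. t j ^ a * top_cofactor n j t)"
      by (simp add: det_qmat_top_expand[OF n])
    also have "\<dots> = (\<Sum>j<n. (G (t j) - G (t 0)) * (t j ^ a * top_cofactor n j t))"
      by (simp add: sum_distrib_left sum_subtractf[symmetric] algebra_simps)
    also have "\<dots> = (\<Sum>j<n. (\<Sum>i<n - 1. if i < j then ?d i else 0) * (t j ^ a * top_cofactor n j t))"
    proof (intro sum.cong refl arg_cong2[where f = "(*)"])
      fix j
      assume "j \<in> {..<n}"
      then have "(\<Sum>i<j. ?d i) = (\<Sum>i<n - 1. if i < j then ?d i else 0)"
        by (subst sum.inter_filter[symmetric]) (auto intro!: sum.cong)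
      then show "G (t j) - G (t 0) = (\<Sum>i<n - 1. if i < j then ?d i else 0)"
        using sum_lessThan_telescope[of "\<lambda>i. G (t i)" j] by simp
    qed
    also have "\<dots> = (\<Sum>i<n - 1. c i t * ?d i)"
      unfolding c_def
      by (simp add: sum_distrib_right sum_distrib_left sum.swap[of _ "{..<n}"] algebra_simps if_distrib
          cong: if_cong)
    finally show "det (qmat_top n (\<lambda>z. G z * z ^ a) t) = (\<Sum>i<n - 1. c i t * ?d i)" .
  qed
qed

section \<open>The antisymmetric part of the ideal\<close>

lemma det_qmat_permute:
  "\<sigma> permutes {..<n} \<Longrightarrow> det (qmat n F a (t \<circ> \<sigma>)) = of_int (sign \<sigma>) * det (qmat n F a t)"
  unfolding qmat_eq_qmat_top by (rule det_qmat_top_permute)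

lemma alternation_IF_numerator_span:
  assumes p: "\<And>i. i < n - 1 \<Longrightarrow> p i \<in> qpoly n"
  shows "\<exists>W. (\<forall>a. W a \<in> qpoly n) \<and> (\<forall>t. alternation n (\<lambda>t. \<Sum>i<n - 1. p i t * (Fc F (t (Suc i)) - Fc F (t i))) t
    = (\<Sum>a<n - 1. W a t * det (qmat n F a t)))"
proof -
  have "\<forall>i\<in>{..<n - 1}. \<exists>w. (\<forall>a. w a \<in> qpoly n)
    \<and> (\<forall>t. alternation n (\<lambda>t. p i t * (Fc F (t (Suc i)) - Fc F (t i))) t
      = (\<Sum>a<n - 1. w a t * det (qmat n F a t)))"
  proof
    fix i
    assume "i \<in> {..<n - 1}"
    then have "p i \<in> qpoly n" "i < n" "Suc i < n"
      using p by auto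
    from alternation_poly_diff_span[OF this, of "map_poly of_int F"]
    show "\<exists>w. (\<forall>a. w a \<in> qpoly n) \<and> (\<forall>t. alternation n (\<lambda>t. p i t * (Fc F (t (Suc i)) - Fc F (t i))) t
      = (\<Sum>a<n - 1. w a t * det (qmat n F a t)))"
      unfolding qmat_eq_qmat_top Fc_def .
  qed
  from bchoice[OF this] obtain w where "\<forall>i\<in>{..<n - 1}. (\<forall>a. w i a \<in> qpoly n)
    \<and> (\<forall>t. alternation n (\<lambda>t. p i t * (Fc F (t (Suc i)) - Fc F (t i))) t
      = (\<Sum>a<n - 1. w i a t * det (qmat n F a t)))"
    by blast
  then have w: "\<And>i a. i < n - 1 \<Longrightarrow> w i a \<in> qpoly n"
    "\<And>i t. i < n - 1 \<Longrightarrow> alternation n (\<lambda>t. p i t * (Fc F (t (Suc i)) - Fc F (t i))) t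
      = (\<Sum>a<n - 1. w i a t * det (qmat n F a t))"
    by auto
  define W where "W a t = (\<Sum>i<n - 1. w i a t)" for a t
  have "alternation n (\<lambda>t. \<Sum>i<n - 1. p i t * (Fc F (t (Suc i)) - Fc F (t i))) t
      = (\<Sum>a<n - 1. W a t * det (qmat n F a t))" for t
  proof -
    have "alternation n (\<lambda>t. \<Sum>i<n - 1. p i t * (Fc F (t (Suc i)) - Fc F (t i))) t
        = (\<Sum>i<n - 1. \<Sum>a<n - 1. w i a t * det (qmat n F a t))"
      by (simp add: alternation_sum w(2))
    also have "\<dots> = (\<Sum>a<n - 1. W a t * det (qmat n F a t))"
      unfolding W_def sum_distrib_right by (rule sum.swap)
    finally show ?thesis .
  qed
  moreover have "W a \<in> qpoly n" for a
    unfolding W_def[abs_def] using w(1) by (intro qpoly_sum) auto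
  ultimately show ?thesis
    by (intro exI[of _ W]) simp
qed

text \<open>Alternating the numerator over the symmetric denominator \<open>rf_denom n F t ^ K\<close> reproduces
  \<open>n!\<close> times the antisymmetric element.\<close>

lemma sgn_fixed_IF_eq_sum_det:
  assumes "f \<in> sgn_fixed n F (IF n F)"
  shows "\<exists>W K. (\<forall>a. W a \<in> qpoly n) \<and> (\<forall>t\<in>pts n F.
    f t = (\<Sum>a<n - 1. W a t / fact n / rf_denom n F t ^ K * det (qmat n F a t)))"
proof -
  from assms have fI: "f \<in> IF n F"
    and anti: "\<And>\<sigma> t. \<sigma> permutes {..<n} \<Longrightarrow> t \<in> pts n F \<Longrightarrow> of_int (sign \<sigma>) * f (t \<circ> \<sigma>) = f t"
    unfolding sgn_fixed_def perm_var_def by auto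
  obtain p K where p: "\<And>i. i < n - 1 \<Longrightarrow> p i \<in> qpoly n"
    "\<And>t. t \<in> pts n F \<Longrightarrow>
      f t = (\<Sum>i<n - 1. p i t * (Fc F (t (Suc i)) - Fc F (t i))) / rf_denom n F t ^ K"
    by (rule IF_common_denominator[OF fI]) blast
  define g where "g t = (\<Sum>i<n - 1. p i t * (Fc F (t (Suc i)) - Fc F (t i)))" for t
  obtain W where W: "\<And>a. W a \<in> qpoly n" "\<And>t. alternation n g t = (\<Sum>a<n - 1. W a t * det (qmat n F a t))"
    using alternation_IF_numerator_span[where p = p and F = F, OF p(1)] unfolding g_def[abs_def]
    by blast
  have "f t = (\<Sum>a<n - 1. W a t / fact n / rf_denom n F t ^ K * det (qmat n F a t))"
    if t: "t \<in> pts n F" for t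
  proof -
    have "alternation n f t = (\<Sum>\<sigma> | \<sigma> permutes {..<n}. of_int (sign \<sigma>) * g (t \<circ> \<sigma>)) / rf_denom n F t ^ K"
      unfolding alternation_def sum_divide_distrib
    proof (rule sum.cong[OF refl])
      fix \<sigma>
      assume "\<sigma> \<in> {\<sigma>. \<sigma> permutes {..<n}}"
      then have \<sigma>: "\<sigma> permutes {..<n}"
        by simp
      show "of_int (sign \<sigma>) * f (t \<circ> \<sigma>) = of_int (sign \<sigma>) * g (t \<circ> \<sigma>) / rf_denom n F t ^ K"
        using p(2)[OF pts_permute[OF \<sigma> t]] rf_denom_permute[OF \<sigma>] unfolding g_def by simp
    qed
    then have fact_f: "fact n * f t = (\<Sum>a<n - 1. W a t * det (qmat n F a t)) / rf_denom n F t ^ K"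
      using antisymmetric_eq_alternation[OF anti t] W(2) unfolding alternation_def by simp
    have "f t = fact n * f t / fact n"
      by simp
    also have "\<dots> = (\<Sum>a<n - 1. W a t * det (qmat n F a t)) / rf_denom n F t ^ K / fact n"
      by (simp only: fact_f)
    finally show ?thesis
      by (simp add: sum_divide_distrib mult.commute)
  qed
  then show ?thesis
    using W(1) by (intro exI[of _ W] exI[of _ K]) simp
qed

lemma symmetrization_quotient_in_RF_W:
  assumes "W \<in> qpoly n"
  shows "restrict (symmetrization n (\<lambda>t. W t / fact n / rf_denom n F t ^ K)) (pts n F) \<in> RF_W n F"
proof -
  let ?s = "restrict (symmetrization n (\<lambda>t. W t / fact n / rf_denom n F t ^ K)) (pts n F)"
  from qpoly_scale[OF inverse_fact_in_Rats assms] have "(\<lambda>t. W t / fact n) \<in> qpoly n"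
    by simp
  then have "?s \<in> RF n F"
  proof (rule RF_intro[OF qpoly_symmetrization])
    show "symmetrization n (\<lambda>t. W t / fact n / rf_denom n F t ^ K) t
        = symmetrization n (\<lambda>t. W t / fact n) t / rf_denom n F t ^ K" for t
      by (rule symmetrization_divide) (simp add: rf_denom_permute)
  qed
  moreover have "perm_var \<sigma> ?s t = ?s t" if "\<sigma> permutes {..<n}" "t \<in> pts n F" for \<sigma> t
    unfolding perm_var_def using that pts_permute symmetrization_permute by simp
  ultimately show ?thesis
    unfolding RF_W_def by blast
qed

lemma sgn_fixed_IF_subset_q_span: "sgn_fixed n F (IF n F) \<subseteq> q_span n F"
proof
  fix f
  assume f: "f \<in> sgn_fixed n F (IF n F)"
  then obtain W K where W: "\<And>a. W a \<in> qpoly n"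
    "\<And>t. t \<in> pts n F \<Longrightarrow> f t = (\<Sum>a<n - 1. W a t / fact n / rf_denom n F t ^ K * det (qmat n F a t))"
    using sgn_fixed_IF_eq_sum_det by blast
  define s where "s a = restrict (symmetrization n (\<lambda>t. W a t / fact n / rf_denom n F t ^ K)) (pts n F)" for a
  have "f t = (\<Sum>a<n - 1. s a t * qgen n F a t)" if t: "t \<in> pts n F" for t
  proof -
    from f have "\<And>\<sigma> t. \<sigma> permutes {..<n} \<Longrightarrow> t \<in> pts n F \<Longrightarrow> of_int (sign \<sigma>) * f (t \<circ> \<sigma>) = f t"
      unfolding sgn_fixed_def perm_var_def by auto
    from antisymmetric_sum_symmetrization[where S = "pts n F" and Q = "\<lambda>a t. det (qmat n F a t)",
        OF pts_permute this det_qmat_permute W(2) t]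
    show ?thesis
      using t by (simp add: s_def qgen_def)
  qed
  then have "restrict f (pts n F) = restrict (\<lambda>t. \<Sum>a<n - 1. s a t * qgen n F a t) (pts n F)"
    by (rule restrict_ext)
  moreover from f obtain a
    where "f = restrict (\<lambda>t. \<Sum>i<n - 1. a i t * (Fc F (t (Suc i)) - Fc F (t i))) (pts n F)"
    unfolding sgn_fixed_def IF_def by blast
  then have "f = restrict f (pts n F)"
    by simp
  ultimately have "f = restrict (\<lambda>t. \<Sum>a<n - 1. s a t * qgen n F a t) (pts n F)"
    by simp
  moreover have "s a \<in> RF_W n F" for a
    unfolding s_def using W(1) by (rule symmetrization_quotient_in_RF_W)
  ultimately show "f \<in> q_span n F"
    unfolding q_span_def by (intro CollectI exI[of _ s] conjI allI impI) simp_all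
qed

lemma det_qmat_in_ideal:
  assumes "a < n - 1"
  shows "\<exists>c. (\<forall>i. c i \<in> qpoly n) \<and> (\<forall>t. det (qmat n F a t)
    = (\<Sum>i<n - 1. c i t * (Fc F (t (Suc i)) - Fc F (t i))))"
proof -
  obtain c where "\<forall>i. c i \<in> qpoly n"
    "\<forall>G t. det (qmat_top n (\<lambda>z. G z * z ^ a) t) = (\<Sum>i<n - 1. c i t * (G (t (Suc i)) - G (t i)))"
    using det_qmat_top_in_ideal[OF assms] by blast
  then show ?thesis
    unfolding qmat_eq_qmat_top by (intro exI[of _ c]) simp
qed

lemma q_span_subset_IF: "q_span n F \<subseteq> IF n F"
proof
  fix f
  assume "f \<in> q_span n F"
  then obtain s where f: "f = restrict (\<lambda>t. \<Sum>a<n - 1. s a t * qgen n F a t) (pts n F)"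
    and s: "\<And>a. a < n - 1 \<Longrightarrow> s a \<in> RF_W n F"
    unfolding q_span_def by blast
  have "\<forall>a\<in>{..<n - 1}. \<exists>c. (\<forall>i. c i \<in> qpoly n)
    \<and> (\<forall>t. det (qmat n F a t) = (\<Sum>i<n - 1. c i t * (Fc F (t (Suc i)) - Fc F (t i))))"
    using det_qmat_in_ideal by blast
  from bchoice[OF this] obtain c where "\<forall>a\<in>{..<n - 1}. (\<forall>i. c a i \<in> qpoly n)
    \<and> (\<forall>t. det (qmat n F a t) = (\<Sum>i<n - 1. c a i t * (Fc F (t (Suc i)) - Fc F (t i))))"
    by blast
  then have c: "\<And>a i. a < n - 1 \<Longrightarrow> c a i \<in> qpoly n"
    "\<And>a t. a < n - 1 \<Longrightarrow> det (qmat n F a t) = (\<Sum>i<n - 1. c a i t * (Fc F (t (Suc i)) - Fc F (t i)))"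
    by auto
  define A where "A i = restrict (\<lambda>t. \<Sum>a<n - 1. s a t * c a i t) (pts n F)" for i
  have "A i \<in> RF n F" for i
    unfolding A_def using s c(1) by (intro RF_lincomb) (auto simp: RF_W_def)
  moreover have "f = restrict (\<lambda>t. \<Sum>i<n - 1. A i t * (Fc F (t (Suc i)) - Fc F (t i))) (pts n F)"
    unfolding f
  proof (rule restrict_ext)
    fix t
    assume t: "t \<in> pts n F"
    have "(\<Sum>a<n - 1. s a t * qgen n F a t)
        = (\<Sum>a<n - 1. \<Sum>i<n - 1. s a t * c a i t * (Fc F (t (Suc i)) - Fc F (t i)))"
      using t c(2) by (simp add: qgen_def sum_distrib_left mult.assoc)
    also have "\<dots> = (\<Sum>i<n - 1. A i t * (Fc F (t (Suc i)) - Fc F (t i)))"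
      unfolding A_def using t by (subst sum.swap) (simp add: sum_distrib_right)
    finally show "(\<Sum>a<n - 1. s a t * qgen n F a t)
        = (\<Sum>i<n - 1. A i t * (Fc F (t (Suc i)) - Fc F (t i)))" .
  qed
  ultimately show "f \<in> IF n F"
    unfolding IF_def by (intro CollectI exI[of _ A] conjI allI impI) simp_all
qed

lemma q_span_antisymmetric:
  assumes f: "f \<in> q_span n F" and \<sigma>: "\<sigma> permutes {..<n}" and t: "t \<in> pts n F"
  shows "of_int (sign \<sigma>) * perm_var \<sigma> f t = f t"
proof -
  obtain s where f: "f = restrict (\<lambda>t. \<Sum>a<n - 1. s a t * qgen n F a t) (pts n F)"
    and s: "\<And>a. a < n - 1 \<Longrightarrow> s a \<in> RF_W n F"
    using f unfolding q_span_def by blast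
  have "s a (t \<circ> \<sigma>) = s a t" if "a < n - 1" for a
    using s[OF that] \<sigma> t unfolding RF_W_def perm_var_def by blast
  then have "perm_var \<sigma> f t = of_int (sign \<sigma>) * (\<Sum>a<n - 1. s a t * qgen n F a t)"
    unfolding perm_var_def f using t pts_permute[OF \<sigma> t]
    by (simp add: qgen_def det_qmat_permute[OF \<sigma>] sum_distrib_left mult.left_commute)
  then show ?thesis
    unfolding f using t by (simp add: of_int_sign_mult_self)
qed

lemma q_span_subset_sgn_fixed_IF: "q_span n F \<subseteq> sgn_fixed n F (IF n F)"
  using q_span_subset_IF q_span_antisymmetric unfolding sgn_fixed_def by blast

theorem lemma3p10:
  fixes n :: nat and F :: "int poly"
  assumes "n \<ge> 2" and "degree F > 0"
  shows "sgn_fixed n F (IF n F) = q_span n F"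
  using sgn_fixed_IF_subset_q_span q_span_subset_sgn_fixed_IF by (rule equalityI)

end
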